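(* Let $w = e^{i\varphi}$ with $0 < \varphi < \pi$, and put $\sqrt{w} = e^{i\varphi/2}$. Let $n$ and $r$ be positive integers and \[ R_{n,r}(x) = \frac{\Gamma(r+1+1/n)}{r!\,\Gamma(1/n)} \int_{1}^{x} (1-t)^{r}(t-x)^{r} t^{-(r+1-1/n)}\, dt, \] where the integration path is the straight line from $1$ to $x$. Then \[ \left|R_{n,r}(w)\right| \leq \frac{\Gamma(r+1+1/n)}{r!\,\Gamma(1/n)}\, \varphi\, \left|1-\sqrt{w}\right|^{2r}. \]
   Context: The power $t^{-(r+1-1/n)}$ is taken with the principal branch. *)

theory Defs
  imports "HOL-Complex_Analysis.Complex_Analysis"
begin

definition Rconst :: "nat \<Rightarrow> nat \<Rightarrow> real" where
  "Rconst n r = Gamma (real r + 1 + 1 / real n) / (fact r * Gamma (1 / real n))"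

text \<open>R_{n,r}(x): contour integral along the straight line from 1 to x;
  complex powr is the principal branch.\<close>
definition R_nr :: "nat \<Rightarrow> nat \<Rightarrow> complex \<Rightarrow> complex" where
  "R_nr n r x = complex_of_real (Rconst n r) *
     contour_integral (linepath 1 x)
       (\<lambda>t. (1 - t) ^ r * (t - x) ^ r * t powr (- complex_of_real (real r + 1 - 1 / real n)))"

end

theory Submission
  imports Defs
begin

text \<open>Since the integrand is holomorphic off the cut \<open>\<real>\<^sub>\<le>\<^sub>0\<close>, Cauchy's theorem in the
  half plane \<open>Re (t / \<surd>w) > 0\<close> moves the integral from the segment \<open>[1, w]\<close> to the unit
  arc from \<open>1\<close> to \<open>w\<close>. On that arc \<open>|t powr -c| = 1\<close>, and for \<open>t = cis \<theta>\<close> the product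
  \<open>|1 - t| |t - w| = 4 sin (\<theta>/2) sin ((\<phi> - \<theta>)/2)\<close> is largest at the midpoint \<open>\<theta> = \<phi>/2\<close>,
  where it equals \<open>|1 - \<surd>w|\<^sup>2\<close>; the arc has length \<open>\<phi>\<close>.\<close>

lemma norm_1_minus_cis: "cmod (1 - cis x) = 2 * \<bar>sin (x / 2)\<bar>"
proof -
  have "(cmod (1 - cis x))\<^sup>2 = (1 - cos x)\<^sup>2 + (sin x)\<^sup>2"
    by (simp add: cmod_power2)
  also have "\<dots> = 2 - 2 * cos x"
    using sin_cos_squared_add[of x] by (simp add: power2_eq_square algebra_simps)
  also have "\<dots> = (2 * \<bar>sin (x / 2)\<bar>)\<^sup>2"
    using cos_double_sin[of "x / 2"] by (simp add: power2_eq_square)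
  finally show ?thesis
    by (metis abs_ge_zero norm_ge_zero power2_eq_iff_nonneg zero_le_mult_iff zero_le_numeral)
qed

lemma norm_1_minus_cis_mult_norm_cis_diff_le:
  assumes "0 \<le> \<theta>" "\<theta> \<le> \<phi>" "\<phi> < pi"
  shows "cmod (1 - cis \<theta>) * cmod (cis \<theta> - cis \<phi>) \<le> (cmod (1 - cis (\<phi> / 2)))\<^sup>2"
proof -
  have "cis \<theta> - cis \<phi> = cis \<theta> * (1 - cis (\<phi> - \<theta>))"
    by (simp add: algebra_simps cis_mult)
  then have dist: "cmod (cis \<theta> - cis \<phi>) = 2 * \<bar>sin ((\<phi> - \<theta>) / 2)\<bar>"
    by (simp add: norm_mult norm_1_minus_cis)
  have "sin (\<theta> / 2) \<ge> 0" "sin ((\<phi> - \<theta>) / 2) \<ge> 0" "sin (\<phi> / 4) \<ge> 0"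
    using assms by (auto intro!: sin_ge_zero)
  then have "cmod (1 - cis \<theta>) * cmod (cis \<theta> - cis \<phi>) = 4 * (sin (\<theta> / 2) * sin ((\<phi> - \<theta>) / 2))"
    and mid: "(cmod (1 - cis (\<phi> / 2)))\<^sup>2 = (2 * sin (\<phi> / 4))\<^sup>2"
    by (simp_all add: norm_1_minus_cis dist)
  moreover have "4 * (sin (\<theta> / 2) * sin ((\<phi> - \<theta>) / 2))
      = 2 * (cos (\<theta> / 2 - (\<phi> - \<theta>) / 2) - cos (\<theta> / 2 + (\<phi> - \<theta>) / 2))"
    by (simp add: sin_times_sin)
  moreover have "\<dots> \<le> 2 * (1 - cos (\<phi> / 2))"
    using cos_le_one[of "\<theta> / 2 - (\<phi> - \<theta>) / 2"] by (simp add: field_simps)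
  moreover have "2 * (1 - cos (\<phi> / 2)) = (2 * sin (\<phi> / 4))\<^sup>2"
    using cos_double_sin[of "\<phi> / 4"] by (simp add: power2_eq_square)
  ultimately show ?thesis
    by (simp add: mid)
qed

lemma inner_cis_cis: "inner (cis \<alpha>) (cis \<beta>) = cos (\<beta> - \<alpha>)"
  by (simp add: inner_complex_def cos_diff algebra_simps)

lemma cis_in_halfplane:
  assumes "0 \<le> \<theta>" "\<theta> \<le> \<phi>" "\<phi> < pi"
  shows "0 < inner (cis (\<phi> / 2)) (cis \<theta>)"
  unfolding inner_cis_cis using assms by (intro cos_gt_zero_pi) auto

lemma halfplane_disjoint_nonpos_Reals:
  assumes "0 \<le> Re a" "0 < inner a x"
  shows "x \<notin> \<real>\<^sub>\<le>\<^sub>0"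
proof
  assume "x \<in> \<real>\<^sub>\<le>\<^sub>0"
  then have "inner a x \<le> 0"
    using assms(1) by (auto simp: complex_nonpos_Reals_iff inner_complex_def mult_nonneg_nonpos)
  with assms(2) show False
    by simp
qed

lemma contour_integral_linepath_eq_part_circlepath:
  assumes "f holomorphic_on S" "open S" "convex S" "0 \<le> \<phi>"
    and arc: "path_image (part_circlepath 0 1 0 \<phi>) \<subseteq> S"
  shows "contour_integral (linepath 1 (cis \<phi>)) f = contour_integral (part_circlepath 0 1 0 \<phi>) f"
proof -
  define \<gamma> where "\<gamma> = part_circlepath 0 1 0 \<phi>"
  have ends: "pathstart \<gamma> = 1" "pathfinish \<gamma> = cis \<phi>"
    by (simp_all add: \<gamma>_def cis_conv_exp)
  have "valid_path \<gamma>" "path_image \<gamma> \<subseteq> S"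
    using arc by (simp_all add: \<gamma>_def)
  moreover have "1 \<in> S" "cis \<phi> \<in> S"
    using ends pathstart_in_path_image pathfinish_in_path_image \<open>path_image \<gamma> \<subseteq> S\<close>
    by (metis subsetD)+
  then have seg: "path_image (linepath 1 (cis \<phi>)) \<subseteq> S"
    using assms(3) by (simp add: closed_segment_subset)
  ultimately have "(f has_contour_integral 0) (linepath 1 (cis \<phi>) +++ reversepath \<gamma>)"
    using ends by (intro Cauchy_theorem_convex_simple[OF assms(1,3)])
      (auto simp: path_image_join valid_path_join)
  then have "contour_integral (linepath 1 (cis \<phi>) +++ reversepath \<gamma>) f = 0"
    by (rule contour_integral_unique)
  moreover have "f contour_integrable_on linepath 1 (cis \<phi>)" "f contour_integrable_on \<gamma>"
    using seg \<open>valid_path \<gamma>\<close> \<open>path_image \<gamma> \<subseteq> S\<close>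
    by (auto intro!: contour_integrable_holomorphic_simple[OF assms(1,2)])
  ultimately show ?thesis
    using ends \<open>valid_path \<gamma>\<close> unfolding \<gamma>_def[symmetric]
    by (simp add: contour_integral_join contour_integrable_reversepath contour_integral_reversepath)
qed

lemma norm_contour_integral_linepath_le_arc:
  assumes "f holomorphic_on S" "open S" "convex S" "0 \<le> \<phi>"
    and arc: "path_image (part_circlepath 0 1 0 \<phi>) \<subseteq> S"
    and bound: "\<And>z. z \<in> path_image (part_circlepath 0 1 0 \<phi>) \<Longrightarrow> norm (f z) \<le> B"
  shows "norm (contour_integral (linepath 1 (cis \<phi>)) f) \<le> B * \<phi>"
proof -
  have "f contour_integrable_on part_circlepath 0 1 0 \<phi>"
    using assms(1,2) arc by (intro contour_integrable_holomorphic_simple) auto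
  moreover have "0 \<le> B"
    using bound[OF pathstart_in_path_image] norm_ge_zero order_trans by blast
  ultimately have "norm (contour_integral (part_circlepath 0 1 0 \<phi>) f) \<le> B * 1 * (\<phi> - 0)"
    using assms(4) bound
    by (intro has_contour_integral_bound_part_circlepath) (auto simp: has_contour_integral_integral)
  then show ?thesis
    using contour_integral_linepath_eq_part_circlepath[OF assms(1-5)] by simp
qed

lemma holomorphic_on_halfplane_powr_integrand:
  assumes "0 \<le> Re a"
  shows "(\<lambda>t. (1 - t) ^ r * (t - w) ^ r * t powr s) holomorphic_on {t. 0 < inner a t}"
  by (intro holomorphic_intros) (use halfplane_disjoint_nonpos_Reals assms in blast)

lemma norm_powr_integrand_on_arc_le:
  fixes c :: real
  assumes "0 \<le> \<theta>" "\<theta> \<le> \<phi>" "\<phi> < pi"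
  shows "norm ((1 - cis \<theta>) ^ r * (cis \<theta> - cis \<phi>) ^ r * cis \<theta> powr complex_of_real c)
    \<le> norm (1 - cis (\<phi> / 2)) ^ (2 * r)"
proof -
  have "norm ((1 - cis \<theta>) ^ r * (cis \<theta> - cis \<phi>) ^ r * cis \<theta> powr complex_of_real c)
      = (cmod (1 - cis \<theta>) * cmod (cis \<theta> - cis \<phi>)) ^ r"
    by (simp add: norm_mult norm_power norm_powr_real_powr' power_mult_distrib)
  also have "\<dots> \<le> ((cmod (1 - cis (\<phi> / 2)))\<^sup>2) ^ r"
    using norm_1_minus_cis_mult_norm_cis_diff_le[OF assms] by (intro power_mono) auto
  finally show ?thesis
    by (simp add: power_mult)
qed

lemma Rconst_nonneg:
  assumes "0 < n"
  shows "0 \<le> Rconst n r"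
  unfolding Rconst_def using assms
  by (intro divide_nonneg_pos mult_pos_pos Gamma_real_pos less_imp_le) (auto intro: add_pos_nonneg)

theorem lemma2p5:
  fixes \<phi> :: real and n r :: nat and w sqw :: complex
  assumes "0 < \<phi>" and "\<phi> < pi" and "0 < n" and "0 < r"
    and "w = exp (\<i> * complex_of_real \<phi>)"
    and "sqw = exp (\<i> * complex_of_real (\<phi> / 2))"
  shows "norm (R_nr n r w) \<le> Rconst n r * \<phi> * norm (1 - sqw) ^ (2 * r)"
proof -
  have w: "w = cis \<phi>" and sqw: "sqw = cis (\<phi> / 2)"
    using assms(5,6) by (simp_all add: cis_conv_exp)
  define f where
    "f = (\<lambda>t. (1 - t) ^ r * (t - w) ^ r * t powr (- complex_of_real (real r + 1 - 1 / real n)))"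
  have arc: "path_image (part_circlepath 0 1 0 \<phi>) = cis ` {0..\<phi>}"
    using assms(1) by (simp add: path_image_part_circlepath' closed_segment_eq_real_ivl)
  have "norm (contour_integral (linepath 1 w) f) \<le> norm (1 - sqw) ^ (2 * r) * \<phi>"
    unfolding w
  proof (rule norm_contour_integral_linepath_le_arc[where S = "{t. 0 < inner (cis (\<phi> / 2)) t}"])
    show "f holomorphic_on {t. 0 < inner (cis (\<phi> / 2)) t}"
      unfolding f_def using assms(1,2)
      by (intro holomorphic_on_halfplane_powr_integrand) (auto intro!: cos_ge_zero)
    show "path_image (part_circlepath 0 1 0 \<phi>) \<subseteq> {t. 0 < inner (cis (\<phi> / 2)) t}"
      unfolding arc using cis_in_halfplane assms(2) by auto
    show "norm (f t) \<le> norm (1 - sqw) ^ (2 * r)" if "t \<in> path_image (part_circlepath 0 1 0 \<phi>)" for t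
      using that assms(2) norm_powr_integrand_on_arc_le[of _ \<phi> r "- (real r + 1 - 1 / real n)"]
      unfolding arc f_def w sqw by auto
  qed (use assms(1) in \<open>auto intro: convex_halfspace_gt open_halfspace_gt\<close>)
  moreover have "R_nr n r w = complex_of_real (Rconst n r) * contour_integral (linepath 1 w) f"
    by (simp add: R_nr_def f_def)
  ultimately have "norm (R_nr n r w) \<le> Rconst n r * (norm (1 - sqw) ^ (2 * r) * \<phi>)"
    using Rconst_nonneg[OF assms(3)] by (simp add: norm_mult mult_left_mono)
  then show ?thesis
    by (simp add: algebra_simps)
qed

end
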